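(* For any $f\in\mathcal{N}_2$, $\varepsilon>0$, and integer width $\omega>\frac{3R_2(f)^2}{\varepsilon^2}$, there exists a depth-two network $f_\phi\in\mathcal{N}_2$ with hidden width $\omega$ and parameters satisfying $\|\phi\|_\infty^2\le\|\phi\|_2^2\le4R_2(f)$ such that $\|f-f_\phi\|_{L^2}\le\varepsilon$.
   Context: $\mathcal{X}_d=\mathbb{S}^{d-1}\times\mathbb{S}^{d-1}\subset\mathbb{R}^{2d}$, $d\ge2$; $\|g\|_{L^2}^2=\mathbb{E}_{\mathbf{x}\sim\mathrm{Unif}(\mathcal{X}_d)}[g(\mathbf{x})^2]$. A depth-two ReLU network is $f_\phi(\mathbf{x})=\sum_{k=1}^{\omega_1}a_k[\mathbf{w}_k^\top\mathbf{x}+b_k]_++c$ with parameter vector $\phi=(\mathbf{W},\mathbf{b},\mathbf{a},c)$ and arbitrary finite width $\omega_1$; $\mathcal{N}_2$ is the set of such functions; $\|\phi\|_2^2$ is the sum of squares of all parameters, $\|\phi\|_\infty$ the maximum absolute parameter value; $R_2(f)=\inf\{\|\phi\|_2^2/2: f_\phi=f\text{ on }\mathcal{X}_d\}$. *)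

theory Defs
  imports "HOL-Probability.Probability"
begin

text \<open>Inputs live in R^(2d) = R^d x R^d; an input is a pair (x1,x2), and the inner
 product on the product type is the sum of the two inner products.\<close>

record 'n net =
  width :: nat
  wts   :: "nat \<Rightarrow> ((real^'n) \<times> (real^'n))"
  bias  :: "nat \<Rightarrow> real"
  outw  :: "nat \<Rightarrow> real"
  outb  :: real

definition relu :: "real \<Rightarrow> real" where
  "relu t = max 0 t"

definition net_fun :: "('n::finite) net \<Rightarrow> ((real^'n) \<times> (real^'n)) \<Rightarrow> real" where
  "net_fun \<phi> x = (\<Sum>k<width \<phi>. outw \<phi> k * relu (wts \<phi> k \<bullet> x + bias \<phi> k)) + outb \<phi>"

definition param_norm2 :: "('n::finite) net \<Rightarrow> real" where
  "param_norm2 \<phi> = (\<Sum>k<width \<phi>. (norm (wts \<phi> k))\<^sup>2 + (bias \<phi> k)\<^sup>2 + (outw \<phi> k)\<^sup>2) + (outb \<phi>)\<^sup>2"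

definition param_sup :: "('n::finite) net \<Rightarrow> real" where
  "param_sup \<phi> = Max (insert \<bar>outb \<phi>\<bar>
     (\<Union>k\<in>{..<width \<phi>}. {\<bar>bias \<phi> k\<bar>, \<bar>outw \<phi> k\<bar>}
        \<union> {\<bar>fst (wts \<phi> k) $ i\<bar> | i. True} \<union> {\<bar>snd (wts \<phi> k) $ i\<bar> | i. True}))"

definition X_d :: "((real^'n) \<times> (real^'n)) set" where
  "X_d = sphere 0 1 \<times> sphere 0 1"

definition N2 :: "(((real^'n) \<times> (real^'n)) \<Rightarrow> real) set" where
  "N2 = {f. \<exists>\<phi>. f = net_fun (\<phi>::('n::finite) net)}"

definition R2 :: "(((real^'n) \<times> (real^'n)) \<Rightarrow> real) \<Rightarrow> real" where
  "R2 f = Inf {param_norm2 \<phi> / 2 | \<phi>::('n::finite) net. \<forall>x\<in>X_d. net_fun \<phi> x = f x}"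

text \<open>Normalized uniform (surface) measure on the unit sphere S^(d-1), realised as the
 cone measure: push-forward of the uniform distribution on the unit ball under
 x \<mapsto> x/|x|.\<close>
definition sphere_unif :: "(real^'n::finite) measure" where
  "sphere_unif = distr (uniform_measure lborel (ball 0 1)) borel (\<lambda>x. x /\<^sub>R norm x)"

definition unif_X :: "((real^'n::finite) \<times> (real^'n)) measure" where
  "unif_X = sphere_unif \<Otimes>\<^sub>M sphere_unif"

definition L2_norm_X :: "(((real^'n::finite) \<times> (real^'n)) \<Rightarrow> real) \<Rightarrow> real" where
  "L2_norm_X g = sqrt (integral\<^sup>L unif_X (\<lambda>x. (g x)\<^sup>2))"

end

theory Submission
  imports Defs
begin

(* Maurey's empirical method. Write the network as f = c + sum_k a_k relu (w_k . x + b_k) and let S =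
   sum_k |a_k| |(w_k, b_k)| be its path norm, so that by AM-GM 2 S + c^2 is at most the squared
   parameter norm. Then f - c is a convex combination, with weights |a_k| |(w_k, b_k)| / S, of rescaled
   neurons Y_k, each bounded by sqrt 3 S on X_d because |(x, 1)| = sqrt 3 there. Averaging over the
   choice of the next neuron shows that the average of some omega of the Y_k approximates f - c within
   sqrt 3 S / sqrt omega in L^2, and balancing the two layers of this average gives a width-omega
   network with squared norm at most 2 S + c^2. Applied to a representative of f with squared norm
   close to 2 R2(f), this gives the theorem; if R2(f) = 0, then f vanishes on X_d. *)

section \<open>The uniform measure on X_d\<close>

lemma prob_space_sphere_unif: "prob_space (sphere_unif :: (real^'n::finite) measure)"
  unfolding sphere_unif_def
proof (rule prob_space.prob_space_distr)
  have "emeasure lborel (ball (0::real^'n) 1) \<noteq> 0"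
    using content_ball_pos[of 1 "0::real^'n"] by (auto simp: measure_def)
  then show "prob_space (uniform_measure lborel (ball (0::real^'n) 1))"
    using emeasure_lborel_ball_finite[of "0::real^'n" 1] by (intro prob_space_uniform_measure) auto
qed simp

lemma sets_sphere_unif: "sets (sphere_unif :: (real^'n::finite) measure) = sets borel"
  unfolding sphere_unif_def by simp

lemma AE_sphere_unif_norm: "AE x in (sphere_unif :: (real^'n::finite) measure). norm x = 1"
  unfolding sphere_unif_def
proof (subst AE_distr_iff)
  have "AE x in lborel. (x::real^'n) \<noteq> 0"
    by (rule AE_I'[of "{0}"]) (auto intro: countable_imp_null_set_lborel)
  then show "AE x in uniform_measure lborel (ball 0 1). norm (x /\<^sub>R norm (x::real^'n)) = 1"
    by (intro AE_uniform_measureI) (auto elim!: eventually_mono)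
qed simp_all

lemma prob_space_unif_X: "prob_space (unif_X :: ((real^'n::finite) \<times> (real^'n)) measure)"
  unfolding unif_X_def by (intro prob_space_pair prob_space_sphere_unif)

lemma sets_unif_X: "sets (unif_X :: ((real^'n::finite) \<times> (real^'n)) measure) = sets borel"
  unfolding unif_X_def using sets_pair_measure_cong[OF sets_sphere_unif sets_sphere_unif]
  by (metis borel_prod)

lemma AE_unif_X_in_X_d: "AE x in (unif_X :: ((real^'n::finite) \<times> (real^'n)) measure). x \<in> X_d"
proof -
  interpret prob_space "sphere_unif :: (real^'n) measure" by (rule prob_space_sphere_unif)
  interpret pair_sigma_finite "sphere_unif :: (real^'n) measure" "sphere_unif :: (real^'n) measure"
    by unfold_locales
  have "closed (X_d :: ((real^'n) \<times> (real^'n)) set)"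
    unfolding X_d_def by (intro closed_Times closed_sphere)
  then have "{x \<in> space unif_X. x \<in> X_d} \<in> sets (unif_X :: ((real^'n) \<times> (real^'n)) measure)"
    by (simp add: sets_unif_X cong: sets_eq_imp_space_eq)
  moreover have "AE x in sphere_unif. AE y in sphere_unif. (x, y) \<in> (X_d :: ((real^'n) \<times> (real^'n)) set)"
    using AE_sphere_unif_norm by (auto elim!: eventually_mono simp: X_d_def)
  ultimately show ?thesis
    unfolding unif_X_def by (rule AE_pair_measure)
qed

section \<open>Maurey's empirical method\<close>

lemma ex_le_of_weighted_mean_le:
  fixes p a :: "'k \<Rightarrow> real"
  assumes K: "finite K" and p: "\<And>k. k \<in> K \<Longrightarrow> p k \<ge> 0" "sum p K = 1"
    and mean: "(\<Sum>k\<in>K. p k * a k) \<le> V"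
  shows "\<exists>k\<in>K. a k \<le> V"
proof (rule ccontr)
  assume "\<not> (\<exists>k\<in>K. a k \<le> V)"
  then have gt: "a k > V" if "k \<in> K" for k
    using that by auto
  have "(\<Sum>k\<in>K. p k * (a k - V)) = (\<Sum>k\<in>K. p k * a k) - V"
    using p(2) by (simp add: right_diff_distrib sum_subtractf sum_distrib_right[symmetric])
  moreover have nonneg: "p k * (a k - V) \<ge> 0" if "k \<in> K" for k
    using gt[OF that] p(1)[OF that] by simp
  ultimately have "(\<Sum>k\<in>K. p k * (a k - V)) = 0"
    using mean by (smt (verit) sum_nonneg)
  then have "p k * (a k - V) = 0" if "k \<in> K" for k
    using K nonneg that by (subst (asm) sum_nonneg_eq_0_iff) auto
  then have "sum p K = 0"
    using gt by (intro sum.neutral) auto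
  with p(2) show False by simp
qed

lemma abs_convex_combination_le:
  fixes p y :: "'k \<Rightarrow> real"
  assumes "\<And>k. k \<in> K \<Longrightarrow> p k \<ge> 0" "sum p K = 1" "\<And>k. k \<in> K \<Longrightarrow> \<bar>y k\<bar> \<le> C"
  shows "\<bar>\<Sum>k\<in>K. p k * y k\<bar> \<le> C"
proof -
  have "\<bar>\<Sum>k\<in>K. p k * y k\<bar> \<le> (\<Sum>k\<in>K. p k * C)"
    using assms by (intro order_trans[OF sum_abs] sum_mono) (auto simp: abs_mult intro: mult_left_mono)
  also have "\<dots> = C"
    using assms(2) by (simp add: sum_distrib_right[symmetric])
  finally show ?thesis .
qed

lemma weighted_sum_sq_deviation:
  fixes p y :: "'k \<Rightarrow> real"
  assumes "sum p K = 1"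
  shows "(\<Sum>k\<in>K. p k * (u + ((\<Sum>j\<in>K. p j * y j) - y k))\<^sup>2)
    = u\<^sup>2 + (\<Sum>k\<in>K. p k * (y k)\<^sup>2) - (\<Sum>k\<in>K. p k * y k)\<^sup>2"
proof -
  define m where "m = (\<Sum>j\<in>K. p j * y j)"
  have "(\<Sum>k\<in>K. p k * (u + (m - y k))\<^sup>2)
      = (\<Sum>k\<in>K. p k * (u + m)\<^sup>2 - 2 * (u + m) * (p k * y k) + p k * (y k)\<^sup>2)"
    by (intro sum.cong) (auto simp: power2_eq_square algebra_simps)
  also have "\<dots> = (u + m)\<^sup>2 - 2 * (u + m) * m + (\<Sum>k\<in>K. p k * (y k)\<^sup>2)"
    using assms by (simp add: m_def sum.distrib sum_subtractf sum_distrib_left[symmetric]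
        sum_distrib_right[symmetric])
  finally show ?thesis
    unfolding m_def[symmetric] by (simp add: power2_eq_square algebra_simps)
qed

lemma (in finite_measure) integrable_power2_of_AE_bounded:
  fixes f :: "'a \<Rightarrow> real"
  assumes "f \<in> borel_measurable M" "AE x in M. \<bar>f x\<bar> \<le> B"
  shows "integrable M (\<lambda>x. (f x)\<^sup>2)"
proof (rule integrable_const_bound[where B="B\<^sup>2"])
  show "AE x in M. norm ((f x)\<^sup>2) \<le> B\<^sup>2"
    using assms(2) by eventually_elim (simp add: abs_le_square_iff[symmetric])
qed (use assms(1) in measurable)

lemma maurey_sampling:
  fixes M :: "'a measure" and F :: "'a \<Rightarrow> real" and Y :: "'k \<Rightarrow> 'a \<Rightarrow> real"
  assumes "prob_space M" and K: "finite K"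
    and p: "\<And>k. k \<in> K \<Longrightarrow> p k \<ge> 0" "sum p K = 1"
    and meas: "\<And>k. k \<in> K \<Longrightarrow> Y k \<in> borel_measurable M" "F \<in> borel_measurable M"
    and F_eq: "AE x in M. F x = (\<Sum>k\<in>K. p k * Y k x)"
    and Y_bound: "AE x in M. \<forall>k\<in>K. \<bar>Y k x\<bar> \<le> C"
  shows "\<exists>s. (\<forall>i<m. s i \<in> K) \<and>
    (\<integral>x. (real m * F x - (\<Sum>i<m. Y (s i) x))\<^sup>2 \<partial>M) \<le> real m * C\<^sup>2"
proof (induction m)
  case 0
  show ?case by simp
next
  case (Suc m)
  interpret prob_space M by fact
  obtain s where s: "\<forall>i<m. s i \<in> K"
    and IH: "(\<integral>x. (real m * F x - (\<Sum>i<m. Y (s i) x))\<^sup>2 \<partial>M) \<le> real m * C\<^sup>2"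
    using Suc.IH by blast
  define U where "U x = real m * F x - (\<Sum>i<m. Y (s i) x)" for x
  define G where "G k x = (U x + (F x - Y k x))\<^sup>2" for k x
  have meas_U: "U \<in> borel_measurable M"
    unfolding U_def using s meas by (intro borel_measurable_diff borel_measurable_sum) auto
  have F_bound: "AE x in M. \<bar>F x\<bar> \<le> C"
    using F_eq Y_bound by eventually_elim (auto intro: abs_convex_combination_le p)
  have U_bound: "AE x in M. \<bar>U x\<bar> \<le> real m * C + real m * C"
    using F_bound Y_bound
  proof eventually_elim
    case (elim x)
    have "\<bar>\<Sum>i<m. Y (s i) x\<bar> \<le> (\<Sum>i<m. C)"
      using s elim(2) by (intro order_trans[OF sum_abs] sum_mono) auto
    then have "\<bar>\<Sum>i<m. Y (s i) x\<bar> \<le> real m * C"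
      by simp
    moreover have "real m * \<bar>F x\<bar> \<le> real m * C"
      using elim(1) by (rule mult_left_mono) simp
    moreover have "\<bar>U x\<bar> \<le> real m * \<bar>F x\<bar> + \<bar>\<Sum>i<m. Y (s i) x\<bar>"
      unfolding U_def using abs_triangle_ineq4 by (metis abs_mult abs_of_nat)
    ultimately show ?case by linarith
  qed
  have int_U: "integrable M (\<lambda>x. (U x)\<^sup>2)"
    by (rule integrable_power2_of_AE_bounded[OF meas_U U_bound])
  have int_G: "integrable M (G k)" if "k \<in> K" for k
    unfolding G_def
  proof (rule integrable_power2_of_AE_bounded)
    show "AE x in M. \<bar>U x + (F x - Y k x)\<bar> \<le> (real m * C + real m * C) + (C + C)"
      using U_bound F_bound Y_bound by eventually_elim (use that in \<open>auto simp: abs_le_iff\<close>)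
  qed (use meas_U meas that in measurable)
  (* The p-average of the next error is at most the current error plus C\<^sup>2, so some k does as well. *)
  have "(\<Sum>k\<in>K. p k * (\<integral>x. G k x \<partial>M)) = (\<integral>x. (\<Sum>k\<in>K. p k * G k x) \<partial>M)"
    using int_G by simp
  also have "\<dots> \<le> (\<integral>x. (U x)\<^sup>2 + C\<^sup>2 \<partial>M)"
  proof (rule integral_mono_AE)
    show "AE x in M. (\<Sum>k\<in>K. p k * G k x) \<le> (U x)\<^sup>2 + C\<^sup>2"
      using F_eq Y_bound
    proof eventually_elim
      case (elim x)
      have "(\<Sum>k\<in>K. p k * (Y k x)\<^sup>2) \<le> (\<Sum>k\<in>K. p k * C\<^sup>2)"
        using elim(2) p(1) by (intro sum_mono mult_left_mono) (auto simp: abs_le_square_iff[symmetric])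
      also have "\<dots> = C\<^sup>2"
        using p(2) by (simp add: sum_distrib_right[symmetric])
      finally show ?case
        unfolding G_def elim(1) weighted_sum_sq_deviation[OF p(2)]
        using zero_le_power2[of "\<Sum>k\<in>K. p k * Y k x"] by linarith
    qed
  qed (use int_G int_U in auto)
  also have "\<dots> = (\<integral>x. (U x)\<^sup>2 \<partial>M) + C\<^sup>2"
    using int_U by (simp add: prob_space)
  also have "\<dots> \<le> real (Suc m) * C\<^sup>2"
    using IH unfolding U_def by (simp add: algebra_simps)
  finally have mean: "(\<Sum>k\<in>K. p k * (\<integral>x. G k x \<partial>M)) \<le> real (Suc m) * C\<^sup>2" .
  obtain k where k: "k \<in> K" and G_k: "(\<integral>x. G k x \<partial>M) \<le> real (Suc m) * C\<^sup>2"
    using ex_le_of_weighted_mean_le[OF K p(1) p(2) mean] by blast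
  have "(real (Suc m) * F x - (\<Sum>i<Suc m. Y ((s(m := k)) i) x))\<^sup>2 = G k x" for x
    by (simp add: G_def U_def algebra_simps)
  moreover have "\<forall>i<Suc m. (s(m := k)) i \<in> K"
    using s k by (simp add: less_Suc_eq)
  ultimately show ?case
    using G_k by (intro exI[of _ "s(m := k)"]) simp
qed

section \<open>Depth-two ReLU networks on X_d\<close>

lemma relu_mult_nonneg: "c \<ge> 0 \<Longrightarrow> relu (c * t) = c * relu t"
  unfolding relu_def by (simp add: max_mult_distrib_left)

lemma abs_relu_le: "\<bar>relu t\<bar> \<le> \<bar>t\<bar>"
  unfolding relu_def by auto

lemma continuous_net_fun: "continuous_on UNIV (net_fun \<phi>)"
  unfolding net_fun_def[abs_def] relu_def by (intro continuous_intros)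

lemma borel_measurable_unif_X_of_continuous:
  "continuous_on UNIV g \<Longrightarrow> (g :: (real^'n::finite) \<times> (real^'n) \<Rightarrow> real) \<in> borel_measurable unif_X"
  by (simp add: measurable_cong_sets[OF sets_unif_X refl] borel_measurable_continuous_onI)

lemma borel_measurable_unif_X_of_N2: "f \<in> N2 \<Longrightarrow> f \<in> borel_measurable unif_X"
  unfolding N2_def by (auto intro: borel_measurable_unif_X_of_continuous continuous_net_fun)

lemma L2_norm_X_eq_0:
  assumes "\<And>x. x \<in> X_d \<Longrightarrow> g x = 0"
  shows "L2_norm_X (g :: (real^'n::finite) \<times> (real^'n) \<Rightarrow> real) = 0"
proof -
  have "AE x in (unif_X :: ((real^'n) \<times> (real^'n)) measure). (g x)\<^sup>2 = 0"
    using AE_unif_X_in_X_d by eventually_elim (simp add: assms)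
  then show ?thesis
    unfolding L2_norm_X_def by (simp add: integral_eq_zero_AE)
qed

lemma abs_affine_on_X_d_le:
  fixes w x :: "(real^'n::finite) \<times> (real^'n)"
  assumes "x \<in> X_d"
  shows "\<bar>w \<bullet> x + b\<bar> \<le> sqrt 3 * sqrt ((norm w)\<^sup>2 + b\<^sup>2)"
proof -
  have "norm (x, 1::real) = sqrt 3"
    using assms by (cases x) (simp add: X_d_def norm_Pair)
  moreover have "\<bar>(w, b) \<bullet> (x, 1::real)\<bar> \<le> norm (w, b) * norm (x, 1::real)"
    by (rule Cauchy_Schwarz_ineq2)
  ultimately show ?thesis
    by (simp add: inner_Pair norm_Pair mult.commute)
qed

definition neuron_norm :: "('n::finite) net \<Rightarrow> nat \<Rightarrow> real" where
  "neuron_norm \<psi> k = sqrt ((norm (wts \<psi> k))\<^sup>2 + (bias \<psi> k)\<^sup>2)"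

definition path_norm :: "('n::finite) net \<Rightarrow> real" where
  "path_norm \<psi> = (\<Sum>k<width \<psi>. \<bar>outw \<psi> k\<bar> * neuron_norm \<psi> k)"

lemma neuron_norm_nonneg: "neuron_norm \<psi> k \<ge> 0"
  unfolding neuron_norm_def by simp

lemma path_norm_nonneg: "path_norm \<psi> \<ge> 0"
  unfolding path_norm_def by (intro sum_nonneg) (simp add: neuron_norm_nonneg)

lemma neuron_norm_eq_0_iff: "neuron_norm \<psi> k = 0 \<longleftrightarrow> wts \<psi> k = 0 \<and> bias \<psi> k = 0"
  unfolding neuron_norm_def by (simp add: add_nonneg_eq_0_iff)

lemma two_path_norm_le_param_norm2: "2 * path_norm \<psi> + (outb \<psi>)\<^sup>2 \<le> param_norm2 \<psi>"
proof -
  have "2 * (\<bar>outw \<psi> k\<bar> * neuron_norm \<psi> k) \<le> (norm (wts \<psi> k))\<^sup>2 + (bias \<psi> k)\<^sup>2 + (outw \<psi> k)\<^sup>2"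
    for k
  proof -
    have "2 * (\<bar>outw \<psi> k\<bar> * neuron_norm \<psi> k) \<le> (neuron_norm \<psi> k)\<^sup>2 + (outw \<psi> k)\<^sup>2"
      using sum_squares_bound[of "\<bar>outw \<psi> k\<bar>" "neuron_norm \<psi> k"] by (simp add: algebra_simps)
    then show ?thesis
      by (simp add: neuron_norm_def)
  qed
  then have "2 * path_norm \<psi> \<le> (\<Sum>k<width \<psi>. (norm (wts \<psi> k))\<^sup>2 + (bias \<psi> k)\<^sup>2 + (outw \<psi> k)\<^sup>2)"
    unfolding path_norm_def sum_distrib_left by (intro sum_mono)
  then show ?thesis
    unfolding param_norm2_def by simp
qed

lemma param_norm2_nonneg: "param_norm2 \<phi> \<ge> 0"
  unfolding param_norm2_def by (intro add_nonneg_nonneg sum_nonneg) auto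

lemma abs_net_fun_sub_outb_le:
  assumes "x \<in> X_d"
  shows "\<bar>net_fun \<psi> x - outb \<psi>\<bar> \<le> sqrt 3 * path_norm \<psi>"
proof -
  have "\<bar>outw \<psi> k * relu (wts \<psi> k \<bullet> x + bias \<psi> k)\<bar> \<le> sqrt 3 * (\<bar>outw \<psi> k\<bar> * neuron_norm \<psi> k)" for k
    using order_trans[OF abs_relu_le abs_affine_on_X_d_le[OF assms]]
    by (simp add: abs_mult neuron_norm_def mult_left_mono mult.left_commute)
  then have "\<bar>net_fun \<psi> x - outb \<psi>\<bar> \<le> (\<Sum>k<width \<psi>. sqrt 3 * (\<bar>outw \<psi> k\<bar> * neuron_norm \<psi> k))"
    unfolding net_fun_def add_diff_cancel_right' by (intro order_trans[OF sum_abs] sum_mono)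
  then show ?thesis
    by (simp add: path_norm_def sum_distrib_left)
qed

lemma abs_net_fun_le_param_norm2:
  assumes "x \<in> X_d"
  shows "\<bar>net_fun \<psi> x\<bar> \<le> param_norm2 \<psi> + sqrt (param_norm2 \<psi>)"
proof -
  have "sqrt 3 * path_norm \<psi> \<le> 2 * path_norm \<psi>"
    using path_norm_nonneg[of \<psi>] by (intro mult_right_mono real_le_lsqrt) auto
  moreover have "\<bar>outb \<psi>\<bar> \<le> sqrt (param_norm2 \<psi>)"
    using two_path_norm_le_param_norm2[of \<psi>] path_norm_nonneg[of \<psi>]
    by (intro real_le_rsqrt) simp
  ultimately show ?thesis
    using abs_net_fun_sub_outb_le[OF assms, of \<psi>] two_path_norm_le_param_norm2[of \<psi>]
      zero_le_power2[of "outb \<psi>"] by linarith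
qed

lemma param_sup_sq_le_param_norm2: "(param_sup \<phi>)\<^sup>2 \<le> param_norm2 \<phi>"
proof -
  define T where "T k = (norm (wts \<phi> k))\<^sup>2 + (bias \<phi> k)\<^sup>2 + (outw \<phi> k)\<^sup>2" for k
  define E where "E k = {\<bar>bias \<phi> k\<bar>, \<bar>outw \<phi> k\<bar>} \<union> {\<bar>fst (wts \<phi> k) $ i\<bar> | i. True}
    \<union> {\<bar>snd (wts \<phi> k) $ i\<bar> | i. True}" for k
  have sum_T: "param_norm2 \<phi> = (\<Sum>k<width \<phi>. T k) + (outb \<phi>)\<^sup>2"
    unfolding param_norm2_def T_def by simp
  have T_nonneg: "T k \<ge> 0" for k
    unfolding T_def by simp
  have entry_le_T: "e\<^sup>2 \<le> T k" if e: "e \<in> E k" for e k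
  proof -
    have "\<bar>fst (wts \<phi> k) $ i\<bar> \<le> norm (wts \<phi> k)" "\<bar>snd (wts \<phi> k) $ i\<bar> \<le> norm (wts \<phi> k)" for i
      by (metis component_le_norm_cart norm_fst_le norm_snd_le prod.collapse order_trans)+
    then consider "e = \<bar>bias \<phi> k\<bar>" | "e = \<bar>outw \<phi> k\<bar>" | "0 \<le> e" "e \<le> norm (wts \<phi> k)"
      using e unfolding E_def by auto
    then show ?thesis
    proof cases
      case 3
      then have "e\<^sup>2 \<le> (norm (wts \<phi> k))\<^sup>2"
        by (simp add: power_mono)
      then show ?thesis
        unfolding T_def by (simp add: add_increasing2)
    qed (simp_all add: T_def)
  qed
  have T_le: "T k \<le> param_norm2 \<phi>" if "k < width \<phi>" for k
    unfolding sum_T using that T_nonneg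
    by (intro add_increasing2[OF zero_le_power2] member_le_sum) auto
  have "param_sup \<phi> \<in> insert \<bar>outb \<phi>\<bar> (\<Union>k<width \<phi>. E k)"
    unfolding param_sup_def E_def by (intro Max_in) (auto simp: full_SetCompr_eq)
  moreover have "(outb \<phi>)\<^sup>2 \<le> param_norm2 \<phi>"
    unfolding sum_T using T_nonneg by (simp add: sum_nonneg)
  ultimately show ?thesis
    using entry_le_T T_le by (auto intro: order_trans)
qed

section \<open>Sampling neurons\<close>

(* For neuron_norm \<psi> k = 0 the division by zero gives the zero function, as does the neuron itself. *)
definition rescaled_neuron :: "('n::finite) net \<Rightarrow> nat \<Rightarrow> (real^'n) \<times> (real^'n) \<Rightarrow> real" where
  "rescaled_neuron \<psi> k x =
     sgn (outw \<psi> k) * path_norm \<psi> / neuron_norm \<psi> k * relu (wts \<psi> k \<bullet> x + bias \<psi> k)"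

(* Neuron i is neuron s i of \<psi> normalised to unit norm, with both layers scaled by sqrt (S / \<omega>):
   it computes rescaled_neuron \<psi> (s i) / \<omega> and has squared norm at most 2 S / \<omega>. *)
definition sampled_net :: "('n::finite) net \<Rightarrow> nat \<Rightarrow> (nat \<Rightarrow> nat) \<Rightarrow> 'n net" where
  "sampled_net \<psi> \<omega> s =
    \<lparr>width = \<omega>,
     wts = (\<lambda>i. (sqrt (path_norm \<psi> / \<omega>) / neuron_norm \<psi> (s i)) *\<^sub>R wts \<psi> (s i)),
     bias = (\<lambda>i. sqrt (path_norm \<psi> / \<omega>) / neuron_norm \<psi> (s i) * bias \<psi> (s i)),
     outw = (\<lambda>i. sgn (outw \<psi> (s i)) * sqrt (path_norm \<psi> / \<omega>)),
     outb = outb \<psi>\<rparr>"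

lemma abs_rescaled_neuron_le:
  assumes "x \<in> X_d"
  shows "\<bar>rescaled_neuron \<psi> k x\<bar> \<le> sqrt 3 * path_norm \<psi>"
proof (cases "neuron_norm \<psi> k = 0")
  case False
  have S: "path_norm \<psi> / neuron_norm \<psi> k \<ge> 0"
    using path_norm_nonneg[of \<psi>] neuron_norm_nonneg[of \<psi> k] by simp
  have "\<bar>rescaled_neuron \<psi> k x\<bar>
      = \<bar>sgn (outw \<psi> k)\<bar> * (path_norm \<psi> / neuron_norm \<psi> k * \<bar>relu (wts \<psi> k \<bullet> x + bias \<psi> k)\<bar>)"
    using S by (simp add: rescaled_neuron_def abs_mult abs_of_nonneg path_norm_nonneg neuron_norm_nonneg)
  also have "\<dots> \<le> 1 * (path_norm \<psi> / neuron_norm \<psi> k * (sqrt 3 * neuron_norm \<psi> k))"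
  proof (intro mult_mono mult_left_mono)
    show "\<bar>relu (wts \<psi> k \<bullet> x + bias \<psi> k)\<bar> \<le> sqrt 3 * neuron_norm \<psi> k"
      unfolding neuron_norm_def by (rule order_trans[OF abs_relu_le abs_affine_on_X_d_le[OF assms]])
  qed (use S in \<open>simp_all add: abs_sgn_eq path_norm_nonneg neuron_norm_nonneg\<close>)
  also have "\<dots> = sqrt 3 * path_norm \<psi>"
    using False by simp
  finally show ?thesis .
qed (simp add: rescaled_neuron_def path_norm_nonneg)

lemma net_fun_eq_convex_combination:
  assumes "path_norm \<psi> > 0"
  shows "net_fun \<psi> x - outb \<psi>
    = (\<Sum>k<width \<psi>. \<bar>outw \<psi> k\<bar> * neuron_norm \<psi> k / path_norm \<psi> * rescaled_neuron \<psi> k x)"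
  unfolding net_fun_def add_diff_cancel_right'
proof (intro sum.cong refl)
  fix k
  show "outw \<psi> k * relu (wts \<psi> k \<bullet> x + bias \<psi> k)
    = \<bar>outw \<psi> k\<bar> * neuron_norm \<psi> k / path_norm \<psi> * rescaled_neuron \<psi> k x"
  proof (cases "neuron_norm \<psi> k = 0")
    case True
    then show ?thesis
      by (simp add: neuron_norm_eq_0_iff relu_def rescaled_neuron_def)
  next
    case False
    then show ?thesis
      using assms by (simp add: rescaled_neuron_def abs_mult_sgn mult.assoc[symmetric])
  qed
qed

lemma net_fun_sampled_net:
  "net_fun (sampled_net \<psi> \<omega> s) x = (\<Sum>i<\<omega>. rescaled_neuron \<psi> (s i) x) / real \<omega> + outb \<psi>"
proof -
  define t where "t = sqrt (path_norm \<psi> / \<omega>)"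
  have t_sq: "t * t = path_norm \<psi> / \<omega>"
    unfolding t_def using path_norm_nonneg[of \<psi>] by simp
  have "sgn (outw \<psi> k) * t * relu ((t / neuron_norm \<psi> k) *\<^sub>R wts \<psi> k \<bullet> x + t / neuron_norm \<psi> k * bias \<psi> k)
      = rescaled_neuron \<psi> k x / \<omega>" for k
  proof -
    have "t / neuron_norm \<psi> k \<ge> 0"
      unfolding t_def using path_norm_nonneg[of \<psi>] neuron_norm_nonneg[of \<psi> k] by simp
    moreover have "(t / neuron_norm \<psi> k) *\<^sub>R wts \<psi> k \<bullet> x + t / neuron_norm \<psi> k * bias \<psi> k
        = t / neuron_norm \<psi> k * (wts \<psi> k \<bullet> x + bias \<psi> k)"
      by (simp add: distrib_left)
    ultimately have "relu ((t / neuron_norm \<psi> k) *\<^sub>R wts \<psi> k \<bullet> x + t / neuron_norm \<psi> k * bias \<psi> k)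
        = t / neuron_norm \<psi> k * relu (wts \<psi> k \<bullet> x + bias \<psi> k)"
      by (simp only: relu_mult_nonneg)
    then have "sgn (outw \<psi> k) * t * relu ((t / neuron_norm \<psi> k) *\<^sub>R wts \<psi> k \<bullet> x + t / neuron_norm \<psi> k * bias \<psi> k)
        = sgn (outw \<psi> k) * (t * t) * inverse (neuron_norm \<psi> k) * relu (wts \<psi> k \<bullet> x + bias \<psi> k)"
      by (simp add: divide_inverse mult_ac)
    then show ?thesis
      unfolding t_sq by (simp add: rescaled_neuron_def divide_inverse mult_ac)
  qed
  then show ?thesis
    unfolding net_fun_def sampled_net_def t_def[symmetric] by (simp add: sum_divide_distrib)
qed

lemma param_norm2_sampled_net: "param_norm2 (sampled_net \<psi> \<omega> s) \<le> 2 * path_norm \<psi> + (outb \<psi>)\<^sup>2"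
proof -
  define t where "t = sqrt (path_norm \<psi> / \<omega>)"
  have t_sq: "t\<^sup>2 = path_norm \<psi> / \<omega>"
    unfolding t_def using path_norm_nonneg[of \<psi>] by simp
  have "(norm ((t / neuron_norm \<psi> k) *\<^sub>R wts \<psi> k))\<^sup>2 + (t / neuron_norm \<psi> k * bias \<psi> k)\<^sup>2
      + (sgn (outw \<psi> k) * t)\<^sup>2 \<le> 2 * t\<^sup>2" for k
  proof -
    have "(neuron_norm \<psi> k)\<^sup>2 = (norm (wts \<psi> k))\<^sup>2 + (bias \<psi> k)\<^sup>2"
      unfolding neuron_norm_def by simp
    then have "(norm ((t / neuron_norm \<psi> k) *\<^sub>R wts \<psi> k))\<^sup>2 + (t / neuron_norm \<psi> k * bias \<psi> k)\<^sup>2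
        = (t / neuron_norm \<psi> k)\<^sup>2 * (neuron_norm \<psi> k)\<^sup>2"
      by (simp only: norm_scaleR power_mult_distrib power2_abs distrib_left)
    also have "\<dots> \<le> t\<^sup>2"
      by (cases "neuron_norm \<psi> k = 0") (simp_all add: power_divide)
    moreover have "(sgn (outw \<psi> k) * t)\<^sup>2 \<le> t\<^sup>2"
      by (simp add: power_mult_distrib sgn_if)
    ultimately show ?thesis
      by linarith
  qed
  then have "(\<Sum>i<\<omega>. (norm ((t / neuron_norm \<psi> (s i)) *\<^sub>R wts \<psi> (s i)))\<^sup>2
      + (t / neuron_norm \<psi> (s i) * bias \<psi> (s i))\<^sup>2 + (sgn (outw \<psi> (s i)) * t)\<^sup>2) \<le> \<omega> * (2 * t\<^sup>2)"
    using sum_mono[of "{..<\<omega>}"] by (metis (no_types, lifting) card_lessThan sum_bounded_above)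
  also have "\<dots> \<le> 2 * path_norm \<psi>"
    unfolding t_sq using path_norm_nonneg[of \<psi>] by (cases "\<omega> = 0") simp_all
  finally show ?thesis
    unfolding param_norm2_def sampled_net_def t_def[symmetric] by simp
qed

lemma sampled_net_approximation:
  fixes \<psi> :: "('n::finite) net"
  assumes "\<omega> > 0" and f_meas: "f \<in> borel_measurable unif_X"
    and rep: "\<And>x. x \<in> X_d \<Longrightarrow> net_fun \<psi> x = f x"
  shows "\<exists>s. L2_norm_X (\<lambda>x. f x - net_fun (sampled_net \<psi> \<omega> s) x) \<le> sqrt 3 * path_norm \<psi> / sqrt \<omega>"
proof (cases "path_norm \<psi> = 0")
  case True
  have "L2_norm_X (\<lambda>x. f x - net_fun (sampled_net \<psi> \<omega> s) x) = 0" for s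
    by (rule L2_norm_X_eq_0)
      (use abs_net_fun_sub_outb_le[of _ \<psi>] rep[symmetric] True in \<open>simp add: net_fun_sampled_net rescaled_neuron_def\<close>)
  then show ?thesis
    using True by simp
next
  case False
  then have S: "path_norm \<psi> > 0"
    using path_norm_nonneg[of \<psi>] by simp
  define p where "p k = \<bar>outw \<psi> k\<bar> * neuron_norm \<psi> k / path_norm \<psi>" for k
  define F where "F x = f x - outb \<psi>" for x
  have "\<exists>s. (\<forall>i<\<omega>. s i \<in> {..<width \<psi>}) \<and>
    (\<integral>x. (real \<omega> * F x - (\<Sum>i<\<omega>. rescaled_neuron \<psi> (s i) x))\<^sup>2 \<partial>unif_X)
      \<le> real \<omega> * (sqrt 3 * path_norm \<psi>)\<^sup>2"
  proof (rule maurey_sampling)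
    show "sum p {..<width \<psi>} = 1"
      using S unfolding p_def path_norm_def by (simp add: sum_divide_distrib[symmetric])
    show "AE x in unif_X. F x = (\<Sum>k<width \<psi>. p k * rescaled_neuron \<psi> k x)"
      using AE_unif_X_in_X_d
      by eventually_elim (simp add: F_def p_def rep[symmetric] net_fun_eq_convex_combination[OF S])
    show "AE x in unif_X. \<forall>k\<in>{..<width \<psi>}. \<bar>rescaled_neuron \<psi> k x\<bar> \<le> sqrt 3 * path_norm \<psi>"
      using AE_unif_X_in_X_d by eventually_elim (simp add: abs_rescaled_neuron_le)
    show "rescaled_neuron \<psi> k \<in> borel_measurable unif_X" for k
      unfolding rescaled_neuron_def[abs_def] relu_def
      by (intro borel_measurable_unif_X_of_continuous continuous_intros)
    show "F \<in> borel_measurable unif_X"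
      unfolding F_def[abs_def] using f_meas by measurable
  qed (use S in \<open>auto simp: prob_space_unif_X p_def neuron_norm_nonneg intro!: divide_nonneg_pos\<close>)
  then obtain s where s: "(\<integral>x. (real \<omega> * F x - (\<Sum>i<\<omega>. rescaled_neuron \<psi> (s i) x))\<^sup>2 \<partial>unif_X)
      \<le> real \<omega> * (sqrt 3 * path_norm \<psi>)\<^sup>2"
    by blast
  have error_eq: "f x - net_fun (sampled_net \<psi> \<omega> s) x
      = (real \<omega> * F x - (\<Sum>i<\<omega>. rescaled_neuron \<psi> (s i) x)) / real \<omega>" for x
    using assms by (simp add: net_fun_sampled_net F_def diff_divide_distrib)
  have "L2_norm_X (\<lambda>x. f x - net_fun (sampled_net \<psi> \<omega> s) x)
      = sqrt ((\<integral>x. (real \<omega> * F x - (\<Sum>i<\<omega>. rescaled_neuron \<psi> (s i) x))\<^sup>2 \<partial>unif_X) / (real \<omega>)\<^sup>2)"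
    unfolding L2_norm_X_def error_eq power_divide by simp
  also have "\<dots> \<le> sqrt (real \<omega> * (sqrt 3 * path_norm \<psi>)\<^sup>2 / (real \<omega>)\<^sup>2)"
    using s by (intro real_sqrt_le_mono divide_right_mono) auto
  also have "\<dots> = sqrt 3 * path_norm \<psi> / sqrt \<omega>"
    using assms S by (simp add: power2_eq_square real_sqrt_mult real_sqrt_divide field_simps)
  finally show ?thesis
    by blast
qed

section \<open>The representation cost\<close>

lemma ex_net_param_norm2_lt_R2:
  fixes f :: "(real^'n::finite) \<times> (real^'n) \<Rightarrow> real"
  assumes "f \<in> N2" "\<delta> > 0"
  shows "\<exists>\<psi>::'n net. (\<forall>x\<in>X_d. net_fun \<psi> x = f x) \<and> param_norm2 \<psi> / 2 < R2 f + \<delta>"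
proof -
  define A where "A = {param_norm2 \<psi> / 2 | \<psi>::'n net. \<forall>x\<in>X_d. net_fun \<psi> x = f x}"
  obtain \<phi> :: "'n net" where "f = net_fun \<phi>"
    using assms(1) unfolding N2_def by blast
  then have "A \<noteq> {}"
    unfolding A_def by blast
  moreover have "Inf A < R2 f + \<delta>"
    using assms(2) unfolding R2_def A_def by simp
  ultimately obtain a where "a \<in> A" "a < R2 f + \<delta>"
    using cInf_lessD by blast
  then show ?thesis
    unfolding A_def by blast
qed

lemma R2_nonneg:
  fixes f :: "(real^'n::finite) \<times> (real^'n) \<Rightarrow> real"
  assumes "f \<in> N2"
  shows "R2 f \<ge> 0"
proof (rule field_le_epsilon)
  fix \<delta> :: real
  assume "\<delta> > 0"
  then obtain \<psi> :: "'n net" where "param_norm2 \<psi> / 2 < R2 f + \<delta>"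
    using ex_net_param_norm2_lt_R2[OF assms] by blast
  then show "0 \<le> R2 f + \<delta>"
    using param_norm2_nonneg[of \<psi>] by linarith
qed

lemma vanishes_on_X_d_of_R2_eq_0:
  fixes f :: "(real^'n::finite) \<times> (real^'n) \<Rightarrow> real"
  assumes "f \<in> N2" "R2 f = 0" "x \<in> X_d"
  shows "f x = 0"
proof -
  have "(f x)\<^sup>2 \<le> 0 + e" if "e > 0" for e
  proof -
    have "min (1 / 2) (e / 8) > 0"
      using that by simp
    then obtain \<psi> :: "'n net" where rep: "\<forall>x\<in>X_d. net_fun \<psi> x = f x"
      and small: "param_norm2 \<psi> / 2 < min (1 / 2) (e / 8)"
      using ex_net_param_norm2_lt_R2[OF assms(1)] assms(2) by fastforce
    define P where "P = param_norm2 \<psi>"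
    have P: "0 \<le> P" "P \<le> 1" "4 * P < e"
      using small param_norm2_nonneg[of \<psi>] unfolding P_def by auto
    have "P \<le> sqrt P"
      using P by (intro real_le_rsqrt) (simp add: power2_eq_square mult_left_le)
    then have "\<bar>f x\<bar> \<le> 2 * sqrt P"
      using abs_net_fun_le_param_norm2[OF assms(3), of \<psi>] rep assms(3) unfolding P_def by auto
    then have "(f x)\<^sup>2 \<le> (2 * sqrt P)\<^sup>2"
      using power_mono[of "\<bar>f x\<bar>" "2 * sqrt P" 2] by simp
    also have "\<dots> = 4 * P"
      using P by (simp add: power_mult_distrib)
    finally show ?thesis
      using P by simp
  qed
  then have "(f x)\<^sup>2 \<le> 0"
    by (rule field_le_epsilon)
  then show ?thesis
    by simp
qed

lemma ex_representative_path_norm_le: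
  fixes f :: "(real^'n::finite) \<times> (real^'n) \<Rightarrow> real"
  assumes "f \<in> N2" "R2 f > 0" "\<epsilon> > 0" "real \<omega> > 3 * (R2 f)\<^sup>2 / \<epsilon>\<^sup>2"
  shows "\<exists>\<psi>::'n net. (\<forall>x\<in>X_d. net_fun \<psi> x = f x) \<and>
    2 * path_norm \<psi> + (outb \<psi>)\<^sup>2 \<le> 4 * R2 f \<and> sqrt 3 * path_norm \<psi> / sqrt \<omega> \<le> \<epsilon>"
proof -
  define B where "B = \<epsilon> * sqrt \<omega> / sqrt 3"
  have "3 * (R2 f)\<^sup>2 < real \<omega> * \<epsilon>\<^sup>2"
    using assms(3,4) by (simp add: pos_divide_less_eq)
  moreover have "B\<^sup>2 = real \<omega> * \<epsilon>\<^sup>2 / 3"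
    unfolding B_def by (simp add: power_mult_distrib power_divide)
  ultimately have "(R2 f)\<^sup>2 < B\<^sup>2"
    by simp
  then have "R2 f < B"
    by (rule power2_less_imp_less) (use assms(3) in \<open>simp add: B_def\<close>)
  (* A representative within min R (B - R) of R2 f has squared norm at most 4 R and path norm at most B. *)
  then have "min (R2 f) (B - R2 f) > 0"
    using assms(2) by simp
  then obtain \<psi> :: "'n net" where rep: "\<forall>x\<in>X_d. net_fun \<psi> x = f x"
    and near: "param_norm2 \<psi> / 2 < R2 f + min (R2 f) (B - R2 f)"
    using ex_net_param_norm2_lt_R2[OF assms(1)] by blast
  have "2 * path_norm \<psi> + (outb \<psi>)\<^sup>2 \<le> 4 * R2 f" and S_le: "path_norm \<psi> \<le> B"
    using near two_path_norm_le_param_norm2[of \<psi>] zero_le_power2[of "outb \<psi>"]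
      min.cobounded1[of "R2 f" "B - R2 f"] min.cobounded2[of "R2 f" "B - R2 f"] by linarith+
  moreover have "sqrt 3 * path_norm \<psi> / sqrt \<omega> \<le> sqrt 3 * B / sqrt \<omega>"
    using S_le by (intro divide_right_mono mult_left_mono) auto
  moreover have "sqrt 3 * B / sqrt \<omega> \<le> \<epsilon>"
    using assms(3) by (cases "\<omega> = 0") (simp_all add: B_def)
  ultimately show ?thesis
    using rep by force
qed

definition zero_net :: "nat \<Rightarrow> ('n::finite) net" where
  "zero_net \<omega> = \<lparr>width = \<omega>, wts = (\<lambda>_. 0), bias = (\<lambda>_. 0), outw = (\<lambda>_. 0), outb = 0\<rparr>"

lemma zero_net_simps [simp]:
  "width (zero_net \<omega>) = \<omega>" "net_fun (zero_net \<omega>) x = 0" "param_norm2 (zero_net \<omega>) = 0"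
  by (simp_all add: zero_net_def net_fun_def param_norm2_def)

theorem lemma2:
  fixes f :: "((real^'n::finite) \<times> (real^'n)) \<Rightarrow> real"
    and \<epsilon> :: real and \<omega> :: nat
  assumes "CARD('n) \<ge> 2"
    and "f \<in> N2"
    and "\<epsilon> > 0"
    and "real \<omega> > 3 * (R2 f)\<^sup>2 / \<epsilon>\<^sup>2"
  shows "\<exists>\<phi>::'n net. width \<phi> = \<omega> \<and>
           (param_sup \<phi>)\<^sup>2 \<le> param_norm2 \<phi> \<and>
           param_norm2 \<phi> \<le> 4 * R2 f \<and>
           L2_norm_X (\<lambda>x. f x - net_fun \<phi> x) \<le> \<epsilon>"
proof (cases "R2 f = 0")
  case True
  have "L2_norm_X (\<lambda>x. f x - net_fun (zero_net \<omega> :: 'n net) x) = 0"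
    using vanishes_on_X_d_of_R2_eq_0[OF assms(2) True] by (intro L2_norm_X_eq_0) simp
  then show ?thesis
    using True assms(3) param_sup_sq_le_param_norm2[of "zero_net \<omega> :: 'n net"]
    by (intro exI[of _ "zero_net \<omega>"]) simp
next
  case False
  then have "R2 f > 0"
    using R2_nonneg[OF assms(2)] by simp
  then obtain \<psi> :: "'n net" where rep: "\<forall>x\<in>X_d. net_fun \<psi> x = f x"
    and norm_le: "2 * path_norm \<psi> + (outb \<psi>)\<^sup>2 \<le> 4 * R2 f"
    and error_le: "sqrt 3 * path_norm \<psi> / sqrt \<omega> \<le> \<epsilon>"
    using ex_representative_path_norm_le[OF assms(2) _ assms(3,4)] by blast
  have "0 \<le> 3 * (R2 f)\<^sup>2 / \<epsilon>\<^sup>2"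
    by simp
  then have "\<omega> > 0"
    using assms(4) by (metis of_nat_0_less_iff order_le_less_trans)
  then obtain s where err: "L2_norm_X (\<lambda>x. f x - net_fun (sampled_net \<psi> \<omega> s) x)
      \<le> sqrt 3 * path_norm \<psi> / sqrt \<omega>"
    using sampled_net_approximation[OF _ borel_measurable_unif_X_of_N2[OF assms(2)] rep[rule_format]]
    by blast
  show ?thesis
  proof (intro exI conjI)
    show "width (sampled_net \<psi> \<omega> s) = \<omega>"
      by (simp add: sampled_net_def)
    show "(param_sup (sampled_net \<psi> \<omega> s))\<^sup>2 \<le> param_norm2 (sampled_net \<psi> \<omega> s)"
      by (rule param_sup_sq_le_param_norm2)
    show "param_norm2 (sampled_net \<psi> \<omega> s) \<le> 4 * R2 f"
      using param_norm2_sampled_net norm_le by (rule order_trans)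
  qed (use err error_le in linarith)
qed

end
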